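(* Let $\mathbf i'=\eta_k\mathbf i$ be a 4-move, $i=i_k$, $j=i_{k+1}$. For $\mathbf g'=(g'_u)\in\mathbb Z^{\oplus\mathbb N}$ define $\mathbf g=(g_u)\in\mathbb Z^{\oplus\mathbb N}$ by: $A=g'_k+\mathsf c_{j,i}[-g'_{k+1}]_+$, $B=-g'_{k+1}+\mathsf c_{i,j}[-A]_+$, and $g_{k+3}=g'_{k+2}-\mathsf c_{j,i}[g'_{k+1}]_++[A]_+$, $g_{k+2}=g'_{k+3}-[-g'_{k+1}]_++[B]_+$, $g_{k+1}=-A+\mathsf c_{j,i}[-B]_+$, $g_k=-B$, $g_{k^-_{\mathbf i}}=g'_{(k+1)^-_{\mathbf i'}}+[g'_{k+1}]_+-[-B]_+$ (if $k^-_{\mathbf i}>0$), $g_{(k+1)^-_{\mathbf i}}=g'_{k^-_{\mathbf i'}}+[A]_+-\mathsf c_{j,i}[B]_+$ (if $(k+1)^-_{\mathbf i}>0$), and $g_u=g'_u$ for all other $u$. Then the map $\mathbf g'\mapsto\mathbf g$ sends the cone $C_{\mathbf i'}$ into the cone $C_{\mathbf i}$.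
   Context: $\mathfrak g$ is a complex finite-dimensional simple Lie algebra with index set $I$ and Cartan matrix $\mathsf C=(\mathsf c_{i,j})$. $\mathbb N=\{1,2,\dots\}$, $[a]_+=\max(a,0)$. $I^{(\infty)}$ is the set of sequences $\mathbf i=(i_u)_{u\in\mathbb N}\in I^{\mathbb N}$ in which each element of $I$ occurs infinitely often; $u^-_{\mathbf i}=\max(\{v<u:i_v=i_u\}\cup\{0\})$. A 4-move $\mathbf i'=\eta_k\mathbf i$ means $i_k=i_{k+2}=i'_{k+1}=i'_{k+3}$, $i_{k+1}=i_{k+3}=i'_k=i'_{k+2}$, $i_u=i'_u$ for $u\notin[k,k+3]$, and $\mathsf c_{i_{k+1},i_k}\mathsf c_{i_k,i_{k+1}}=2$ (so $(k+1)^-_{\mathbf i'}=k^-_{\mathbf i}$, $k^-_{\mathbf i'}=(k+1)^-_{\mathbf i}$). For $\mathbf i\in I^{\mathbb N}$, the cone $C_{\mathbf i}=\{\mathbf g=(g_u)\in\mathbb Z^{\oplus\mathbb N}:\sum_{v\ge u,\,i_v=i_u}g_v\ge0\ \text{for all }u\in\mathbb N\}$ ($\mathbb Z^{\oplus\mathbb N}$ = finitely supported integer sequences). *)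

theory Defs
  imports Complex_Main
begin

definition pos :: "int \<Rightarrow> int" where "pos a = max a 0"

(* Cartan matrix of a complex finite-dimensional simple Lie algebra, index set = finite type 'i:
   a generalized Cartan matrix which is indecomposable, symmetrizable, with positive definite
   symmetrization (= of finite type, connected Dynkin diagram). *)
definition cartan_simple :: "('i::finite \<Rightarrow> 'i \<Rightarrow> int) \<Rightarrow> bool" where
  "cartan_simple C \<longleftrightarrow>
     (\<forall>i. C i i = 2) \<and>
     (\<forall>i j. i \<noteq> j \<longrightarrow> C i j \<le> 0) \<and>
     (\<forall>i j. C i j = 0 \<longleftrightarrow> C j i = 0) \<and>
     (\<exists>d::'i \<Rightarrow> int. (\<forall>i. d i > 0) \<and> (\<forall>i j. d i * C i j = d j * C j i) \<and>
        (\<forall>x::'i \<Rightarrow> real. x \<noteq> (\<lambda>_. 0) \<longrightarrow>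
            (\<Sum>i\<in>UNIV. \<Sum>j\<in>UNIV. x i * real_of_int (d i * C i j) * x j) > 0)) \<and>
     (\<forall>S::'i set. S \<noteq> {} \<and> S \<noteq> UNIV \<longrightarrow> (\<exists>i\<in>S. \<exists>j. j \<notin> S \<and> C i j \<noteq> 0))"

(* sequences i = (i_u)_{u \<in> \<nat>}, \<nat> = {1,2,...}; the value at 0 is irrelevant *)
definition I_inf :: "(nat \<Rightarrow> 'i) \<Rightarrow> bool" where
  "I_inf s \<longleftrightarrow> (\<forall>a. infinite {u. 1 \<le> u \<and> s u = a})"

definition uminus_seq :: "(nat \<Rightarrow> 'i) \<Rightarrow> nat \<Rightarrow> nat" where
  "uminus_seq s u = Max ({v. 1 \<le> v \<and> v < u \<and> s v = s u} \<union> {0})"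

definition four_move :: "('i \<Rightarrow> 'i \<Rightarrow> int) \<Rightarrow> (nat \<Rightarrow> 'i) \<Rightarrow> (nat \<Rightarrow> 'i) \<Rightarrow> nat \<Rightarrow> bool" where
  "four_move C s s' k \<longleftrightarrow> 1 \<le> k \<and>
     s k = s (k+2) \<and> s k = s' (k+1) \<and> s k = s' (k+3) \<and>
     s (k+1) = s (k+3) \<and> s (k+1) = s' k \<and> s (k+1) = s' (k+2) \<and>
     (\<forall>u. 1 \<le> u \<and> (u < k \<or> k + 3 < u) \<longrightarrow> s u = s' u) \<and>
     C (s (k+1)) (s k) * C (s k) (s (k+1)) = 2"

(* Z^{\<oplus>\<nat>}: finitely supported integer sequences indexed by \<nat> = {1,2,...};
   represented as nat \<Rightarrow> int with value 0 at the dummy index 0 *)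
definition Zfin :: "(nat \<Rightarrow> int) set" where
  "Zfin = {g. g 0 = 0 \<and> finite {u. g u \<noteq> 0}}"

(* the cone C_s; the sum over {v \<ge> u, s_v = s_u} is a finite sum over the support *)
definition cone :: "(nat \<Rightarrow> 'i) \<Rightarrow> (nat \<Rightarrow> int) set" where
  "cone s = {g \<in> Zfin. \<forall>u. 1 \<le> u \<longrightarrow> (\<Sum>v\<in>{v. u \<le> v \<and> s v = s u \<and> g v \<noteq> 0}. g v) \<ge> 0}"

definition move_map :: "('i \<Rightarrow> 'i \<Rightarrow> int) \<Rightarrow> (nat \<Rightarrow> 'i) \<Rightarrow> (nat \<Rightarrow> 'i) \<Rightarrow> nat
    \<Rightarrow> (nat \<Rightarrow> int) \<Rightarrow> (nat \<Rightarrow> int)" where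
  "move_map C s s' k g' = (let i = s k; j = s (k+1);
      A = g' k + C j i * pos (- g' (k+1));
      B = - g' (k+1) + C i j * pos (- A);
      km = uminus_seq s k; k1m = uminus_seq s (k+1);
      k1m' = uminus_seq s' (k+1); km' = uminus_seq s' k
    in (\<lambda>u.
      if u = k+3 then g' (k+2) - C j i * pos (g' (k+1)) + pos A
      else if u = k+2 then g' (k+3) - pos (- g' (k+1)) + pos B
      else if u = k+1 then - A + C j i * pos (- B)
      else if u = k then - B
      else if km > 0 \<and> u = km then g' k1m' + pos (g' (k+1)) - pos (- B)
      else if k1m > 0 \<and> u = k1m then g' km' + pos A - C j i * pos B
      else g' u))"

end

theory Submission
  imports Defs
begin

text \<open>Only the tails of the cone condition that start inside the block k..k+3 change.
Beyond the block nothing moves. For a tail starting below the block, the corrections made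
at k^- and (k+1)^- exactly compensate the change of the i- and j-column sums inside the block,
so that tail is unchanged too. The four tails starting inside the block are piecewise-linear
expressions in g'(k), g'(k+1) and the two tails of g' starting at k+2 and k+3; their
nonnegativity is a finite case check using {c(i,j), c(j,i)} = {-1,-2}.\<close>

text \<open>Tails of the cone condition, truncated at a bound n beyond the support.\<close>

definition tail_sum :: "(nat \<Rightarrow> 'i) \<Rightarrow> (nat \<Rightarrow> int) \<Rightarrow> nat \<Rightarrow> nat \<Rightarrow> 'i \<Rightarrow> int" where
  "tail_sum s g u n t = (\<Sum>v\<in>{u..<n}. if s v = t then g v else 0)"

lemma tail_sum_Suc:
  "u < n \<Longrightarrow> tail_sum s g u n t = (if s u = t then g u else 0) + tail_sum s g (Suc u) n t"
  unfolding tail_sum_def by (rule sum.atLeast_Suc_lessThan)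

lemma tail_sum_split: "u \<le> m \<Longrightarrow> m \<le> n \<Longrightarrow> tail_sum s g u n t = tail_sum s g u m t + tail_sum s g m n t"
  unfolding tail_sum_def by (simp add: sum.atLeastLessThan_concat)

lemma tail_sum_cong:
  "(\<And>v. u \<le> v \<Longrightarrow> v < n \<Longrightarrow> s v = r v \<and> g v = f v) \<Longrightarrow> tail_sum s g u n t = tail_sum r f u n t"
  unfolding tail_sum_def by (rule sum.cong) auto

lemma sum_support_eq_tail_sum:
  assumes "\<And>v. n \<le> v \<Longrightarrow> g v = 0"
  shows "(\<Sum>v\<in>{v. u \<le> v \<and> s v = t \<and> g v \<noteq> 0}. g v) = tail_sum s g u n t"
proof -
  have "tail_sum s g u n t = (\<Sum>v\<in>{v\<in>{u..<n}. s v = t}. g v)"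
    unfolding tail_sum_def by (rule sum.inter_filter[symmetric]) simp
  also have "\<dots> = (\<Sum>v\<in>{v. u \<le> v \<and> s v = t \<and> g v \<noteq> 0}. g v)"
    using assms by (intro sum.mono_neutral_right) (auto, meson not_le)
  finally show ?thesis ..
qed

lemma cone_iff_tail_sum_nonneg:
  assumes "g 0 = 0" and "\<And>v. n \<le> v \<Longrightarrow> g v = 0"
  shows "g \<in> cone s \<longleftrightarrow> (\<forall>u\<ge>1. 0 \<le> tail_sum s g u n (s u))"
proof -
  have "{v. g v \<noteq> 0} \<subseteq> {..<n}"
    using assms(2) not_less by blast
  then have "finite {v. g v \<noteq> 0}"
    by (rule finite_subset) simp
  with assms show ?thesis
    by (simp add: cone_def Zfin_def sum_support_eq_tail_sum[OF assms(2)])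
qed

lemma Zfin_vanishes_from:
  assumes "g \<in> Zfin"
  obtains n where "m \<le> n" and "\<And>v. n \<le> v \<Longrightarrow> g v = 0"
proof -
  obtain b where "\<forall>v\<in>{v. g v \<noteq> 0}. v < b"
    using assms finite_nat_set_iff_bounded unfolding Zfin_def by blast
  then show thesis
    by (intro that[of "max m b"]) auto
qed

lemma uminus_seq_less: "1 \<le> u \<Longrightarrow> uminus_seq s u < u"
  unfolding uminus_seq_def by (subst Max_less_iff) auto

lemma uminus_seq_pos:
  assumes "0 < uminus_seq s u"
  shows "1 \<le> uminus_seq s u" and "s (uminus_seq s u) = s u"
proof -
  have "uminus_seq s u \<in> {v. 1 \<le> v \<and> v < u \<and> s v = s u} \<union> {0}"
    unfolding uminus_seq_def by (rule Max_in) auto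
  with assms show "1 \<le> uminus_seq s u" and "s (uminus_seq s u) = s u"
    by auto
qed

lemma le_uminus_seq: "1 \<le> v \<Longrightarrow> v < u \<Longrightarrow> s v = s u \<Longrightarrow> v \<le> uminus_seq s u"
  unfolding uminus_seq_def by (rule Max_ge) auto

lemma nonpos_mult_eq_two:
  fixes c d :: int
  assumes "c \<le> 0" and "d \<le> 0" and "c * d = 2"
  shows "(c = -1 \<and> d = -2) \<or> (c = -2 \<and> d = -1)"
proof -
  have "-c dvd 2"
    using assms(3) by (metis dvd_triv_left minus_mult_minus)
  then have "-c \<le> 2"
    using assms by (intro zdvd_imp_le) auto
  moreover have "c \<noteq> 0"
    using assms by auto
  ultimately have "c = -1 \<or> c = -2"
    using assms(1) by auto
  then show ?thesis
    using assms(3) by auto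
qed

lemma pos_minus_pos_neg: "pos x - pos (- x) = x"
  by (simp add: pos_def)

lemma rank2_exchange_identity:
  fixes c c' x y w A B :: int
  assumes "c * c' = 2" and "A = y + c * pos (- x)" and "B = - x + c' * pos (- A)"
  shows "(pos A - c * pos B) + (- A + c * pos (- B)) + (w - c * pos x + pos A) = y + w"
proof -
  have "c * B = - (c * x) + 2 * pos (- A)"
    using assms(1) unfolding assms(3) by (simp add: algebra_simps mult.assoc[symmetric])
  moreover have "c * pos B - c * pos (- B) = c * B" and "c * pos x - c * pos (- x) = c * x"
    by (simp_all add: right_diff_distrib[symmetric] pos_minus_pos_neg)
  moreover have "pos A - pos (- A) = A"
    by (rule pos_minus_pos_neg)
  ultimately show ?thesis
    using assms(2) by linarith
qed

lemma rank2_exchange_nonneg: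
  fixes c c' x y p q A B :: int
  assumes "(c = -1 \<and> c' = -2) \<or> (c = -2 \<and> c' = -1)"
    and "A = y + c * pos (- x)" and "B = - x + c' * pos (- A)"
    and "0 \<le> p" and "0 \<le> p + x" and "0 \<le> q" and "0 \<le> q + y"
  shows "0 \<le> p - pos (- x) + pos B" and "0 \<le> - B + (p - pos (- x) + pos B)"
    and "0 \<le> q - c * pos x + pos A" and "0 \<le> (- A + c * pos (- B)) + (q - c * pos x + pos A)"
  using assms unfolding pos_def by (auto simp: max_def split: if_splits)

lemma tail_sum_alternating_block:
  assumes "m + 4 \<le> n" and "a \<noteq> b"
    and "r m = a" and "r (m+1) = b" and "r (m+2) = a" and "r (m+3) = b"
  shows "tail_sum r f m n a = f m + f (m+2) + tail_sum r f (m+4) n a"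
    and "tail_sum r f m n b = f (m+1) + f (m+3) + tail_sum r f (m+4) n b"
    and "tail_sum r f (m+1) n b = f (m+1) + f (m+3) + tail_sum r f (m+4) n b"
    and "tail_sum r f (m+2) n a = f (m+2) + tail_sum r f (m+4) n a"
    and "tail_sum r f (m+3) n b = f (m+3) + tail_sum r f (m+4) n b"
    and "t \<noteq> a \<Longrightarrow> t \<noteq> b \<Longrightarrow> tail_sum r f m n t = tail_sum r f (m+4) n t"
  using assms tail_sum_Suc[of m n r f] tail_sum_Suc[of "m+1" n r f] tail_sum_Suc[of "m+2" n r f]
    tail_sum_Suc[of "m+3" n r f]
  by (simp_all add: numeral_eq_Suc)

locale four_move_setting =
  fixes C :: "'i \<Rightarrow> 'i \<Rightarrow> int" and s s' :: "nat \<Rightarrow> 'i" and k :: nat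
  assumes cartan_diag: "\<And>a. C a a = 2"
    and cartan_off_diag: "\<And>a b. a \<noteq> b \<Longrightarrow> C a b \<le> 0"
    and four_move: "four_move C s s' k"
begin

abbreviation "i \<equiv> s k"
abbreviation "j \<equiv> s (k+1)"

lemma k_pos: "1 \<le> k"
  using four_move by (simp add: four_move_def)

lemma colours: "s (k+2) = i" "s (k+3) = j" "s' k = j" "s' (k+1) = i" "s' (k+2) = j" "s' (k+3) = i"
  using four_move unfolding four_move_def by auto

lemma same_outside_block: "1 \<le> v \<Longrightarrow> v < k \<or> k + 3 < v \<Longrightarrow> s' v = s v"
  using four_move by (simp add: four_move_def)

lemma cartan_block: "(C j i = -1 \<and> C i j = -2) \<or> (C j i = -2 \<and> C i j = -1)"
  and i_ne_j: "i \<noteq> j"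
proof -
  have prod: "C j i * C i j = 2"
    using four_move unfolding four_move_def by (elim conjE)
  then show "i \<noteq> j"
    using cartan_diag by force
  then show "(C j i = -1 \<and> C i j = -2) \<or> (C j i = -2 \<and> C i j = -1)"
    using prod by (intro nonpos_mult_eq_two cartan_off_diag) auto
qed

lemma uminus_seq_s'_Suc: "uminus_seq s' (k+1) = uminus_seq s k"
proof -
  have "{v. 1 \<le> v \<and> v < k+1 \<and> s' v = s' (k+1)} = {v. 1 \<le> v \<and> v < k \<and> s v = i}"
    using colours i_ne_j same_outside_block by (auto simp: less_Suc_eq)
  then show ?thesis
    unfolding uminus_seq_def using colours by simp
qed

lemma uminus_seq_s': "uminus_seq s' k = uminus_seq s (k+1)"
proof -
  have "{v. 1 \<le> v \<and> v < k \<and> s' v = s' k} = {v. 1 \<le> v \<and> v < k+1 \<and> s v = j}"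
    using colours i_ne_j same_outside_block by (auto simp: less_Suc_eq)
  then show ?thesis
    unfolding uminus_seq_def using colours by simp
qed

lemma uminus_seq_Suc_less: "uminus_seq s (k+1) < k"
proof -
  have "uminus_seq s (k+1) \<noteq> k"
    using uminus_seq_pos[of s "k+1"] k_pos i_ne_j by fastforce
  then show ?thesis
    using uminus_seq_less[of "k+1" s] by simp
qed

definition A :: "(nat \<Rightarrow> int) \<Rightarrow> int" where
  "A g' = g' k + C j i * pos (- g' (k+1))"

definition B :: "(nat \<Rightarrow> int) \<Rightarrow> int" where
  "B g' = - g' (k+1) + C i j * pos (- A g')"

text \<open>The amounts added to g' at k^- and at (k+1)^- respectively.\<close>

definition shift_i :: "(nat \<Rightarrow> int) \<Rightarrow> int" where
  "shift_i g' = pos (g' (k+1)) - pos (- B g')"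

definition shift_j :: "(nat \<Rightarrow> int) \<Rightarrow> int" where
  "shift_j g' = pos (A g') - C j i * pos (B g')"

abbreviation "\<phi> \<equiv> move_map C s s' k"

lemma move_map_unfold: "\<phi> g' = (\<lambda>u.
      if u = k+3 then g' (k+2) - C j i * pos (g' (k+1)) + pos (A g')
      else if u = k+2 then g' (k+3) - pos (- g' (k+1)) + pos (B g')
      else if u = k+1 then - A g' + C j i * pos (- B g')
      else if u = k then - B g'
      else if 0 < uminus_seq s k \<and> u = uminus_seq s k then g' u + shift_i g'
      else if 0 < uminus_seq s (k+1) \<and> u = uminus_seq s (k+1) then g' u + shift_j g'
      else g' u)"
  unfolding move_map_def Let_def A_def B_def shift_i_def shift_j_def uminus_seq_s'_Suc uminus_seq_s'
  by (auto simp: fun_eq_iff)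

lemma move_map_block:
  "\<phi> g' k = - B g'"
  "\<phi> g' (k+1) = - A g' + C j i * pos (- B g')"
  "\<phi> g' (k+2) = g' (k+3) - pos (- g' (k+1)) + pos (B g')"
  "\<phi> g' (k+3) = g' (k+2) - C j i * pos (g' (k+1)) + pos (A g')"
  by (simp_all add: move_map_unfold)

lemma move_map_above_block: "k + 3 < v \<Longrightarrow> \<phi> g' v = g' v"
  using uminus_seq_less[OF k_pos, of s] uminus_seq_Suc_less by (simp add: move_map_unfold)

lemma move_map_below_block:
  assumes "v < k"
  shows "\<phi> g' v = g' v + (if 0 < uminus_seq s k \<and> v = uminus_seq s k then shift_i g' else 0)
    + (if 0 < uminus_seq s (k+1) \<and> v = uminus_seq s (k+1) then shift_j g' else 0)"
proof -
  have "uminus_seq s k \<noteq> uminus_seq s (k+1)" if "0 < uminus_seq s k"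
    using uminus_seq_pos(2)[OF that] uminus_seq_pos(2)[of s "k+1"] i_ne_j that by force
  then show ?thesis
    using assms by (auto simp: move_map_unfold)
qed

lemma shift_i_balance: "shift_i g' + \<phi> g' k + \<phi> g' (k+2) = g' (k+1) + g' (k+3)"
  using pos_minus_pos_neg[of "g' (k+1)"] pos_minus_pos_neg[of "B g'"]
  unfolding move_map_block shift_i_def by linarith

lemma shift_j_balance: "shift_j g' + \<phi> g' (k+1) + \<phi> g' (k+3) = g' k + g' (k+2)"
  unfolding move_map_block shift_j_def
  by (rule rank2_exchange_identity[OF _ A_def B_def]) (use cartan_block in auto)

lemma tail_sum_above_block: "k + 4 \<le> u \<Longrightarrow> tail_sum s (\<phi> g') u n t = tail_sum s' g' u n t"
  by (rule tail_sum_cong) (simp add: move_map_above_block same_outside_block)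

lemma tail_sum_before_block:
  assumes "1 \<le> u" and "u < k"
  shows "tail_sum s (\<phi> g') u k (s u) = tail_sum s' g' u k (s u)
    + (if s u = i then shift_i g' else 0) + (if s u = j then shift_j g' else 0)"
proof -
  define km k1m where "km = uminus_seq s k" and "k1m = uminus_seq s (k+1)"
  define di dj where "di = (if s u = i then shift_i g' else 0)" and "dj = (if s u = j then shift_j g' else 0)"
  have km: "0 < km \<Longrightarrow> s km = i" and k1m: "0 < k1m \<Longrightarrow> s k1m = j"
    unfolding km_def k1m_def by (simp_all add: uminus_seq_pos)
  have pointwise: "(if s v = s u then \<phi> g' v else 0)
      = (if s' v = s u then g' v else 0) + (if v = km then di else 0) + (if v = k1m then dj else 0)"
    if "u \<le> v" and "v < k" for v
  proof -
    have "s' v = s v" and "0 < v"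
      using that assms same_outside_block[of v] by simp_all
    moreover have "\<phi> g' v = g' v + (if v = km then shift_i g' else 0) + (if v = k1m then shift_j g' else 0)"
      using move_map_below_block[OF that(2), of g'] \<open>0 < v\<close> unfolding km_def k1m_def by auto
    moreover have "v = km \<Longrightarrow> v \<noteq> k1m"
      using km k1m i_ne_j \<open>0 < v\<close> by auto
    ultimately show ?thesis
      using km k1m \<open>0 < v\<close> unfolding di_def dj_def by auto
  qed
  have "km \<in> {u..<k}" if "s u = i"
    using le_uminus_seq[OF assms, of s] uminus_seq_less[OF k_pos, of s] that unfolding km_def by simp
  moreover have "k1m \<in> {u..<k}" if "s u = j"
    using le_uminus_seq[of u "k+1" s] assms uminus_seq_Suc_less that unfolding k1m_def by simp
  ultimately have "(\<Sum>v\<in>{u..<k}. if v = km then di else 0) = di"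
      and "(\<Sum>v\<in>{u..<k}. if v = k1m then dj else 0) = dj"
    unfolding di_def dj_def by (simp_all add: sum.delta)
  moreover have "tail_sum s (\<phi> g') u k (s u) = tail_sum s' g' u k (s u)
      + (\<Sum>v\<in>{u..<k}. if v = km then di else 0) + (\<Sum>v\<in>{u..<k}. if v = k1m then dj else 0)"
    unfolding tail_sum_def sum.distrib[symmetric] by (rule sum.cong) (simp_all add: pointwise)
  ultimately show ?thesis
    unfolding di_def dj_def by simp
qed


lemma tail_sums_in_s:
  assumes "k + 4 \<le> n"
  shows "tail_sum s f k n i = f k + f (k+2) + tail_sum s f (k+4) n i"
    and "tail_sum s f k n j = f (k+1) + f (k+3) + tail_sum s f (k+4) n j"
    and "tail_sum s f (k+1) n j = f (k+1) + f (k+3) + tail_sum s f (k+4) n j"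
    and "tail_sum s f (k+2) n i = f (k+2) + tail_sum s f (k+4) n i"
    and "tail_sum s f (k+3) n j = f (k+3) + tail_sum s f (k+4) n j"
    and "t \<noteq> i \<Longrightarrow> t \<noteq> j \<Longrightarrow> tail_sum s f k n t = tail_sum s f (k+4) n t"
  using tail_sum_alternating_block[OF assms i_ne_j] colours by simp_all

lemma tail_sums_in_s':
  assumes "k + 4 \<le> n"
  shows "tail_sum s' f k n j = f k + f (k+2) + tail_sum s' f (k+4) n j"
    and "tail_sum s' f k n i = f (k+1) + f (k+3) + tail_sum s' f (k+4) n i"
    and "tail_sum s' f (k+1) n i = f (k+1) + f (k+3) + tail_sum s' f (k+4) n i"
    and "tail_sum s' f (k+2) n j = f (k+2) + tail_sum s' f (k+4) n j"
    and "tail_sum s' f (k+3) n i = f (k+3) + tail_sum s' f (k+4) n i"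
    and "t \<noteq> i \<Longrightarrow> t \<noteq> j \<Longrightarrow> tail_sum s' f k n t = tail_sum s' f (k+4) n t"
  using tail_sum_alternating_block[OF assms i_ne_j[symmetric]] colours by simp_all

lemma tail_sum_below_block:
  assumes "1 \<le> u" and "u < k" and "k + 4 \<le> n"
  shows "tail_sum s (\<phi> g') u n (s u) = tail_sum s' g' u n (s' u)"
proof -
  have "tail_sum s (\<phi> g') k n (s u) + (if s u = i then shift_i g' else 0) + (if s u = j then shift_j g' else 0)
      = tail_sum s' g' k n (s u)"
    using tail_sums_in_s[OF assms(3)] tail_sums_in_s'[OF assms(3)] tail_sum_above_block[of "k+4"]
      shift_i_balance[of g'] shift_j_balance[of g'] i_ne_j
    by auto
  moreover have "tail_sum r f u n (s u) = tail_sum r f u k (s u) + tail_sum r f k n (s u)" for r f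
    using assms by (intro tail_sum_split) auto
  moreover have "s' u = s u"
    using assms same_outside_block by simp
  ultimately show ?thesis
    using tail_sum_before_block[OF assms(1,2), of g'] by simp
qed

lemma tail_sum_block_nonneg:
  assumes "k + 4 \<le> n" and "k \<le> u" and "u \<le> k + 3"
    and nonneg: "\<And>u. k \<le> u \<Longrightarrow> u \<le> k + 3 \<Longrightarrow> 0 \<le> tail_sum s' g' u n (s' u)"
  shows "0 \<le> tail_sum s (\<phi> g') u n (s u)"
proof -
  define p q where "p = g' (k+3) + tail_sum s' g' (k+4) n i" and "q = g' (k+2) + tail_sum s' g' (k+4) n j"
  have "0 \<le> p" "0 \<le> p + g' (k+1)" "0 \<le> q" "0 \<le> q + g' k"
    using nonneg[of "k+3"] nonneg[of "k+1"] nonneg[of "k+2"] nonneg[of k]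
      tail_sums_in_s'[OF assms(1)] colours unfolding p_def q_def by (simp_all add: algebra_simps)
  note ineqs = rank2_exchange_nonneg[OF cartan_block A_def B_def this]
  have above: "tail_sum s (\<phi> g') (k+4) n t = tail_sum s' g' (k+4) n t" for t
    by (rule tail_sum_above_block) simp
  consider "u = k" | "u = k+1" | "u = k+2" | "u = k+3"
    using assms(2,3) by linarith
  then show ?thesis
  proof cases
    case 1
    then have "tail_sum s (\<phi> g') u n (s u) = \<phi> g' k + \<phi> g' (k+2) + tail_sum s' g' (k+4) n i"
      using tail_sums_in_s(1)[OF assms(1)] above by simp
    then show ?thesis
      using ineqs(2) move_map_block(1,3)[of g'] unfolding p_def by linarith
  next
    case 2
    then have "tail_sum s (\<phi> g') u n (s u) = \<phi> g' (k+1) + \<phi> g' (k+3) + tail_sum s' g' (k+4) n j"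
      using tail_sums_in_s(3)[OF assms(1)] above by simp
    then show ?thesis
      using ineqs(4) move_map_block(2,4)[of g'] unfolding q_def by linarith
  next
    case 3
    then have "tail_sum s (\<phi> g') u n (s u) = \<phi> g' (k+2) + tail_sum s' g' (k+4) n i"
      using tail_sums_in_s(4)[OF assms(1)] above colours by simp
    then show ?thesis
      using ineqs(1) move_map_block(3)[of g'] unfolding p_def by linarith
  next
    case 4
    then have "tail_sum s (\<phi> g') u n (s u) = \<phi> g' (k+3) + tail_sum s' g' (k+4) n j"
      using tail_sums_in_s(5)[OF assms(1)] above colours by simp
    then show ?thesis
      using ineqs(3) move_map_block(4)[of g'] unfolding q_def by linarith
  qed
qed

lemma move_map_cone: "\<phi> ` cone s' \<subseteq> cone s"
proof
  fix g assume "g \<in> \<phi> ` cone s'"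
  then obtain g' where g': "g' \<in> cone s'" and g: "g = \<phi> g'"
    by blast
  have "g' \<in> Zfin"
    using g' by (simp add: cone_def)
  then obtain n where n: "k + 4 \<le> n" and vanish: "\<And>v. n \<le> v \<Longrightarrow> g' v = 0"
    by (rule Zfin_vanishes_from[where m = "k + 4"]) blast
  have g'0: "g' 0 = 0"
    using \<open>g' \<in> Zfin\<close> by (simp add: Zfin_def)
  have tails: "0 \<le> tail_sum s' g' u n (s' u)" if "1 \<le> u" for u
    using g' that cone_iff_tail_sum_nonneg[of g' n s'] g'0 vanish by blast
  have "\<phi> g' 0 = 0"
    using move_map_below_block[of 0 g'] k_pos g'0 by simp
  moreover have "\<phi> g' v = 0" if "n \<le> v" for v
    using that n vanish move_map_above_block by simp
  moreover have "0 \<le> tail_sum s (\<phi> g') u n (s u)" if "1 \<le> u" for u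
  proof -
    consider "u < k" | "k \<le> u" "u \<le> k + 3" | "k + 4 \<le> u"
      by linarith
    then show ?thesis
    proof cases
      case 1
      then show ?thesis
        using tail_sum_below_block[OF that 1 n] tails[OF that] by simp
    next
      case 2
      then show ?thesis
        using tail_sum_block_nonneg[OF n 2] tails k_pos by simp
    next
      case 3
      then show ?thesis
        using tail_sum_above_block[OF 3] tails[OF that] same_outside_block[OF that] by simp
    qed
  qed
  ultimately show "g \<in> cone s"
    unfolding g using cone_iff_tail_sum_nonneg[of "\<phi> g'" n s] by blast
qed

end

theorem lemma3p8:
  fixes C :: "'i::finite \<Rightarrow> 'i \<Rightarrow> int"
    and s s' :: "nat \<Rightarrow> 'i" and k :: nat
  assumes "cartan_simple C"
    and "I_inf s"
    and "four_move C s s' k"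
  shows "move_map C s s' k ` cone s' \<subseteq> cone s"
proof -
  interpret four_move_setting C s s' k
    using assms(1,3) unfolding cartan_simple_def by unfold_locales auto
  show ?thesis
    by (rule move_map_cone)
qed

end
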